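(* (a) For every $n$-variable symmetric Boolean function $f$ it holds that $NN(f)\le n+1$. (b) For the $n$-variable parity function, $BNN(x_1\oplus x_2\oplus\cdots\oplus x_n)=2^n$.
   Context: For a Boolean function $f:\{0,1\}^n\to\{0,1\}$, points $a$ with $f(a)=1$ are positive and those with $f(a)=0$ negative. A nearest neighbor representation of $f$ is a pair of disjoint sets $(P,N)$ of points of $\mathbb R^n$ (positive and negative prototypes) such that for every $a\in\{0,1\}^n$: if $a$ is positive, there is $b\in P$ with $d(a,b)<d(a,c)$ for all $c\in N$; if $a$ is negative, there is $b\in N$ with $d(a,b)<d(a,c)$ for all $c\in P$. Here $d$ is the Euclidean distance. The size of the representation is $|P\cup N|$. $NN(f)$ is the minimum size of a nearest neighbor representation of $f$; $BNN(f)$ is the minimum size of such a representation with $P\cup N\subseteq\{0,1\}^n$ (Boolean prototypes). A Boolean function is symmetric if its value depends only on the weight (number of 1 components) of its input. *)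

theory Defs
  imports "HOL-Analysis.Analysis"
begin

text \<open>Points of R^n are modelled as real^'n (n = CARD('n)). A Boolean function
  {0,1}^n -> {0,1} is a predicate on real^'n; only its values on the cube matter
  (True = positive, False = negative).\<close>

definition bool_cube :: "(real^'n) set" where
  "bool_cube = {x. \<forall>i. x $ i = 0 \<or> x $ i = 1}"

definition weight :: "real^'n \<Rightarrow> real" where
  "weight x = (\<Sum>i\<in>UNIV. x $ i)"

definition symmetric_bf :: "(real^'n \<Rightarrow> bool) \<Rightarrow> bool" where
  "symmetric_bf f \<longleftrightarrow>
     (\<forall>a\<in>bool_cube. \<forall>b\<in>bool_cube. weight a = weight b \<longrightarrow> f a = f b)"

definition parity :: "real^'n \<Rightarrow> bool" where
  "parity x \<longleftrightarrow> odd (card {i. x $ i = 1})"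

definition nn_rep :: "(real^'n \<Rightarrow> bool) \<Rightarrow> (real^'n) set \<Rightarrow> (real^'n) set \<Rightarrow> bool" where
  "nn_rep f P N \<longleftrightarrow> finite P \<and> finite N \<and> P \<inter> N = {} \<and>
     (\<forall>a\<in>bool_cube.
        (f a \<longrightarrow> (\<exists>b\<in>P. \<forall>c\<in>N. dist a b < dist a c)) \<and>
        (\<not> f a \<longrightarrow> (\<exists>b\<in>N. \<forall>c\<in>P. dist a b < dist a c)))"

definition NN :: "(real^'n \<Rightarrow> bool) \<Rightarrow> nat" where
  "NN f = (LEAST k. \<exists>P N. nn_rep f P N \<and> card (P \<union> N) = k)"

definition BNN :: "(real^'n \<Rightarrow> bool) \<Rightarrow> nat" where
  "BNN f = (LEAST k. \<exists>P N. nn_rep f P N \<and> P \<union> N \<subseteq> bool_cube \<and> card (P \<union> N) = k)"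

end

theory Submission
  imports Defs
begin

text \<open>(a) For a cube point of weight w the squared distance to the diagonal point
  t(1,...,1) is a quadratic in t with its unique minimum at t = w/n. Hence the points
  (k/n)(1,...,1), 0 \<le> k \<le> n, each labelled with the value of f on weight k, represent f.

  (b) Suppose a representation of parity by Boolean prototypes misses a cube point a; let b
  be a nearest prototype (it has the label of a) and i a coordinate where b and a differ.
  Flipping bit i of a lowers the squared distance to b by exactly 1 and to any other Boolean
  prototype by at most 1, while changing the parity. So at the flipped point b is still at
  least as close as every prototype of the opposite label, which is impossible.\<close>

lemma dist_vec_power2: "(dist x y)\<^sup>2 = (\<Sum>i\<in>UNIV. (x $ i - y $ i)\<^sup>2)"
  for x y :: "real^'n"
  by (simp add: dist_vec_def L2_set_def dist_real_def sum_nonneg)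

lemma dist_le_iff_power2: "dist a b \<le> dist a c \<longleftrightarrow> (dist a b)\<^sup>2 \<le> (dist a c)\<^sup>2"
  by simp

lemma dist_less_iff_power2: "dist a b < dist a c \<longleftrightarrow> (dist a b)\<^sup>2 < (dist a c)\<^sup>2"
  using dist_le_iff_power2[of a c b] by linarith

lemma nn_rep_by_nearest_labelled:
  fixes f label :: "real^'n \<Rightarrow> bool"
  assumes "finite Q"
    and nearest: "\<And>a. a \<in> bool_cube \<Longrightarrow>
      \<exists>q\<in>Q. label q = f a \<and> (\<forall>r\<in>Q. label r \<noteq> label q \<longrightarrow> dist a q < dist a r)"
  shows "nn_rep f {q\<in>Q. label q} {q\<in>Q. \<not> label q}"
  unfolding nn_rep_def
proof (intro conjI ballI impI)
  fix a :: "real^'n" assume "a \<in> bool_cube"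
  then obtain q where "q \<in> Q" "label q = f a"
    and q: "\<forall>r\<in>Q. label r \<noteq> label q \<longrightarrow> dist a q < dist a r"
    using nearest by blast
  then show "f a \<Longrightarrow> \<exists>b\<in>{q\<in>Q. label q}. \<forall>c\<in>{q\<in>Q. \<not> label q}. dist a b < dist a c"
    and "\<not> f a \<Longrightarrow> \<exists>b\<in>{q\<in>Q. \<not> label q}. \<forall>c\<in>{q\<in>Q. label q}. dist a b < dist a c"
    by auto
qed (use \<open>finite Q\<close> in auto)

lemma nn_rep_finite: "nn_rep f P N \<Longrightarrow> finite (P \<union> N)"
  unfolding nn_rep_def by blast

lemma nn_rep_positiveD:
  "nn_rep f P N \<Longrightarrow> a \<in> bool_cube \<Longrightarrow> f a \<Longrightarrow> \<exists>b\<in>P. \<forall>c\<in>N. dist a b < dist a c"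
  unfolding nn_rep_def by blast

lemma nn_rep_negativeD:
  "nn_rep f P N \<Longrightarrow> a \<in> bool_cube \<Longrightarrow> \<not> f a \<Longrightarrow> \<exists>b\<in>N. \<forall>c\<in>P. dist a b < dist a c"
  unfolding nn_rep_def by blast

lemma NN_le_card: "nn_rep f P N \<Longrightarrow> NN f \<le> card (P \<union> N)"
  unfolding NN_def by (rule Least_le) blast

lemma nn_rep_Not: "nn_rep f P N \<Longrightarrow> nn_rep (\<lambda>x. \<not> f x) N P"
  unfolding nn_rep_def by auto

lemma weight_bool_cube:
  assumes "a \<in> bool_cube"
  shows "weight a = real (card {i. a $ i = 1})"
proof -
  have "weight a = (\<Sum>i\<in>UNIV. if a $ i = 1 then 1 else 0)"
    using assms unfolding weight_def bool_cube_def by (intro sum.cong) auto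
  then show ?thesis
    by (simp add: sum.If_cases)
qed

lemma dist_vec_power2_eq:
  fixes a :: "real^'n"
  shows "real CARD('n) * (dist a (vec t))\<^sup>2
         = real CARD('n) * (\<Sum>i\<in>UNIV. (a $ i)\<^sup>2) - (weight a)\<^sup>2 + (real CARD('n) * t - weight a)\<^sup>2"
proof -
  have "(dist a (vec t))\<^sup>2 = (\<Sum>i\<in>UNIV. (a $ i)\<^sup>2) - 2 * t * weight a + real CARD('n) * t\<^sup>2"
    by (simp add: dist_vec_power2 power2_diff sum.distrib sum_subtractf weight_def
        sum_distrib_left algebra_simps)
  also have "real CARD('n) * \<dots>
      = real CARD('n) * (\<Sum>i\<in>UNIV. (a $ i)\<^sup>2) - (weight a)\<^sup>2 + (real CARD('n) * t - weight a)\<^sup>2"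
    by (simp add: power2_eq_square algebra_simps)
  finally show ?thesis .
qed

lemma dist_vec_less_vec_iff:
  fixes a :: "real^'n"
  shows "dist a (vec s) < dist a (vec t)
         \<longleftrightarrow> (real CARD('n) * s - weight a)\<^sup>2 < (real CARD('n) * t - weight a)\<^sup>2"
proof -
  have "dist a (vec s) < dist a (vec t)
        \<longleftrightarrow> real CARD('n) * (dist a (vec s))\<^sup>2 < real CARD('n) * (dist a (vec t))\<^sup>2"
    by (simp add: dist_less_iff_power2)
  then show ?thesis
    by (simp add: dist_vec_power2_eq)
qed

lemma NN_symmetric_le:
  fixes f :: "real^'n \<Rightarrow> bool"
  assumes sym: "symmetric_bf f"
  shows "NN f \<le> CARD('n) + 1"
proof -
  define centre :: "real^'n \<Rightarrow> real^'n" where "centre a = vec (weight a / CARD('n))" for a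
  define Q where "Q = centre ` bool_cube"
  define label where "label q \<longleftrightarrow> (\<exists>b\<in>bool_cube. f b \<and> q = centre b)" for q
  have centre_eq_iff: "centre a = centre b \<longleftrightarrow> weight a = weight b" for a b
    by (simp add: centre_def)
  have label_centre: "label (centre a) = f a" if "a \<in> bool_cube" for a
    using sym that unfolding label_def symmetric_bf_def centre_eq_iff by blast
  have centre_nearest: "dist a (centre a) < dist a (centre b)" if "weight a \<noteq> weight b" for a b
    using that by (simp add: centre_def dist_vec_less_vec_iff)
  define R :: "(real^'n) set" where "R = (\<lambda>k. vec (real k / CARD('n))) ` {..CARD('n)}"
  have centre_in_R: "centre a \<in> R" if "a \<in> bool_cube" for a
    unfolding R_def
  proof
    show "centre a = vec (real (card {i. a $ i = 1}) / CARD('n))"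
      using weight_bool_cube[OF that] by (simp add: centre_def)
    show "card {i. a $ i = 1} \<in> {..CARD('n)}"
      by (simp add: card_mono)
  qed
  then have "Q \<subseteq> R"
    unfolding Q_def by blast
  have "finite R" and "card R \<le> CARD('n) + 1"
    unfolding R_def using card_image_le[of "{..CARD('n)}"] by simp_all
  then have "finite Q" and "card Q \<le> CARD('n) + 1"
    using \<open>Q \<subseteq> R\<close> finite_subset card_mono[of R Q] by auto
  have "nn_rep f {q\<in>Q. label q} {q\<in>Q. \<not> label q}"
  proof (rule nn_rep_by_nearest_labelled[OF \<open>finite Q\<close>])
    fix a :: "real^'n" assume a: "a \<in> bool_cube"
    show "\<exists>q\<in>Q. label q = f a \<and> (\<forall>r\<in>Q. label r \<noteq> label q \<longrightarrow> dist a q < dist a r)"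
    proof (intro bexI conjI ballI impI)
      show "centre a \<in> Q" "label (centre a) = f a"
        using a label_centre by (simp_all add: Q_def)
      fix r assume "r \<in> Q" and r_label: "label r \<noteq> label (centre a)"
      then obtain b where "r = centre b" by (auto simp: Q_def)
      with r_label have "weight a \<noteq> weight b"
        using centre_eq_iff by metis
      then show "dist a (centre a) < dist a r"
        using centre_nearest \<open>r = centre b\<close> by simp
    qed
  qed
  then have "NN f \<le> card ({q\<in>Q. label q} \<union> {q\<in>Q. \<not> label q})"
    by (rule NN_le_card)
  also have "\<dots> = card Q"
    by (rule arg_cong[where f = card]) blast
  also have "\<dots> \<le> CARD('n) + 1"
    by fact
  finally show ?thesis .
qed

lemma card_bool_cube: "card (bool_cube :: (real^'n) set) = 2 ^ CARD('n)"
proof -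
  let ?indicator = "\<lambda>S :: 'n set. (\<chi> i. if i \<in> S then 1 else 0) :: real^'n"
  have "bij_betw ?indicator UNIV bool_cube"
  proof (rule bij_betwI')
    show "?indicator S = ?indicator T \<longleftrightarrow> S = T" for S T
      by (auto simp: vec_eq_iff split: if_splits)
    show "?indicator S \<in> bool_cube" for S
      by (simp add: bool_cube_def)
    show "\<exists>S\<in>UNIV. x = ?indicator S" if "x \<in> bool_cube" for x
      using that by (intro bexI[of _ "{i. x $ i = 1}"]) (auto simp: bool_cube_def vec_eq_iff)
  qed
  then have "card (bool_cube :: (real^'n) set) = card (UNIV :: 'n set set)"
    by (simp only: bij_betw_same_card)
  also have "\<dots> = 2 ^ CARD('n)"
    by (simp add: card_UNIV_set)
  finally show ?thesis .
qed

lemma finite_bool_cube: "finite bool_cube"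
  using card_bool_cube by (metis card.infinite power_not_zero zero_neq_numeral)

definition flip_coord :: "real^'n \<Rightarrow> 'n \<Rightarrow> real^'n" where
  "flip_coord a i = (\<chi> j. if j = i then 1 - a $ j else a $ j)"

lemma flip_coord_in_bool_cube: "a \<in> bool_cube \<Longrightarrow> flip_coord a i \<in> bool_cube"
  unfolding bool_cube_def flip_coord_def by auto

lemma parity_flip_coord:
  assumes "a \<in> bool_cube"
  shows "parity (flip_coord a i) \<longleftrightarrow> \<not> parity a"
proof (cases "a $ i = 1")
  case True
  then have "{j. flip_coord a i $ j = 1} = {j. a $ j = 1} - {i}"
    by (auto simp: flip_coord_def)
  moreover have "card {j. a $ j = 1} = Suc (card ({j. a $ j = 1} - {i}))"
    using True by (intro card_Suc_Diff1[symmetric]) auto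
  ultimately show ?thesis
    unfolding parity_def by simp
next
  case False
  with assms have "{j. flip_coord a i $ j = 1} = insert i {j. a $ j = 1}" "i \<notin> {j. a $ j = 1}"
    by (auto simp: flip_coord_def bool_cube_def)
  then show ?thesis
    unfolding parity_def by simp
qed

lemma dist_flip_coord_power2:
  assumes "a \<in> bool_cube" "c \<in> bool_cube"
  shows "(dist (flip_coord a i) c)\<^sup>2 = (dist a c)\<^sup>2 + (if c $ i = a $ i then 1 else -1)"
proof -
  have "(dist (flip_coord a i) c)\<^sup>2 - (dist a c)\<^sup>2 = (1 - a $ i - c $ i)\<^sup>2 - (a $ i - c $ i)\<^sup>2"
    unfolding dist_vec_power2 sum_subtractf[symmetric]
    by (subst sum.remove[of _ i]) (auto simp: flip_coord_def intro!: sum.neutral)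
  moreover have "a $ i = 0 \<or> a $ i = 1" "c $ i = 0 \<or> c $ i = 1"
    using assms unfolding bool_cube_def by auto
  ultimately show ?thesis
    by auto
qed

lemma positive_point_is_prototype:
  fixes f :: "real^'n \<Rightarrow> bool"
  assumes rep: "nn_rep f P N" and boolean: "P \<union> N \<subseteq> bool_cube"
    and flip: "\<And>a i. a \<in> bool_cube \<Longrightarrow> f (flip_coord a i) \<longleftrightarrow> \<not> f a"
    and a: "a \<in> bool_cube" "f a"
  shows "a \<in> P \<union> N"
proof (rule ccontr)
  assume a_notin: "a \<notin> P \<union> N"
  obtain b0 where "b0 \<in> P" and b0: "\<forall>c\<in>N. dist a b0 < dist a c"
    using nn_rep_positiveD[OF rep a] by blast
  obtain b where b: "is_arg_min (dist a) (\<lambda>x. x \<in> P \<union> N) b"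
    using ex_is_arg_min_if_finite[OF nn_rep_finite[OF rep]] \<open>b0 \<in> P\<close> by blast
  then have "b \<in> P \<union> N" and b_nearest: "\<And>c. c \<in> P \<union> N \<Longrightarrow> dist a b \<le> dist a c"
    by (auto simp: is_arg_min_linorder)
  have "b \<in> P"
    using b_nearest[of b0] b0 \<open>b \<in> P \<union> N\<close> \<open>b0 \<in> P\<close> by (meson UnE UnI1 not_le)
  from \<open>b \<in> P \<union> N\<close> a_notin have "b \<noteq> a"
    by blast
  then obtain i where i: "b $ i \<noteq> a $ i"
    by (auto simp: vec_eq_iff)
  have "flip_coord a i \<in> bool_cube" "\<not> f (flip_coord a i)"
    using flip a flip_coord_in_bool_cube by simp_all
  then obtain c where "c \<in> N" and c: "dist (flip_coord a i) c < dist (flip_coord a i) b"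
    using nn_rep_negativeD[OF rep] \<open>b \<in> P\<close> by blast
  have "(dist (flip_coord a i) c)\<^sup>2 < (dist (flip_coord a i) b)\<^sup>2"
    using c by (simp only: dist_less_iff_power2)
  have "(dist (flip_coord a i) b)\<^sup>2 = (dist a b)\<^sup>2 - 1"
    using dist_flip_coord_power2[OF a(1), of b i] boolean \<open>b \<in> P\<close> i by auto
  also have "\<dots> \<le> (dist a c)\<^sup>2 - 1"
    using b_nearest[of c] \<open>c \<in> N\<close> by simp
  also have "\<dots> \<le> (dist (flip_coord a i) c)\<^sup>2"
    using dist_flip_coord_power2[OF a(1), of c i] boolean \<open>c \<in> N\<close> by auto
  finally show False
    using \<open>(dist (flip_coord a i) c)\<^sup>2 < _\<close> by linarith
qed

lemma bool_cube_subset_prototypes: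
  fixes f :: "real^'n \<Rightarrow> bool"
  assumes rep: "nn_rep f P N" and boolean: "P \<union> N \<subseteq> bool_cube"
    and flip: "\<And>a i. a \<in> bool_cube \<Longrightarrow> f (flip_coord a i) \<longleftrightarrow> \<not> f a"
  shows "bool_cube \<subseteq> P \<union> N"
proof
  fix a :: "real^'n" assume a: "a \<in> bool_cube"
  show "a \<in> P \<union> N"
  proof (cases "f a")
    case True
    show ?thesis
      by (rule positive_point_is_prototype[OF rep boolean]) (use flip a True in simp_all)
  next
    case False
    have "a \<in> N \<union> P"
      by (rule positive_point_is_prototype[OF nn_rep_Not[OF rep]]) (use boolean flip a False in simp_all)
    then show ?thesis by blast
  qed
qed

lemma BNN_parity: "BNN (parity :: real^'n \<Rightarrow> bool) = 2 ^ CARD('n)"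
  unfolding BNN_def
proof (rule Least_equality)
  let ?P = "{q \<in> bool_cube :: (real^'n) set. parity q}"
  let ?N = "{q \<in> bool_cube :: (real^'n) set. \<not> parity q}"
  have "nn_rep parity ?P ?N"
  proof (rule nn_rep_by_nearest_labelled[OF finite_bool_cube])
    fix a :: "real^'n" assume "a \<in> bool_cube"
    then show "\<exists>q\<in>bool_cube. parity q = parity a
                 \<and> (\<forall>r\<in>bool_cube. parity r \<noteq> parity q \<longrightarrow> dist a q < dist a r)"
      by (intro bexI[of _ a]) auto
  qed
  moreover have "?P \<union> ?N = bool_cube"
    by blast
  ultimately have "nn_rep parity ?P ?N \<and> ?P \<union> ?N \<subseteq> bool_cube \<and> card (?P \<union> ?N) = 2 ^ CARD('n)"
    using card_bool_cube[where 'n = 'n] by simp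
  then show "\<exists>P N. nn_rep (parity :: real^'n \<Rightarrow> bool) P N \<and> P \<union> N \<subseteq> bool_cube
                     \<and> card (P \<union> N) = 2 ^ CARD('n)"
    by blast
next
  fix k
  assume "\<exists>P N. nn_rep (parity :: real^'n \<Rightarrow> bool) P N \<and> P \<union> N \<subseteq> bool_cube \<and> card (P \<union> N) = k"
  then obtain P N :: "(real^'n) set"
    where rep: "nn_rep parity P N" and boolean: "P \<union> N \<subseteq> bool_cube" and "card (P \<union> N) = k"
    by blast
  have "bool_cube \<subseteq> P \<union> N"
    using rep boolean parity_flip_coord by (rule bool_cube_subset_prototypes)
  then have "card (bool_cube :: (real^'n) set) \<le> card (P \<union> N)"
    by (rule card_mono[OF nn_rep_finite[OF rep]])
  then show "2 ^ CARD('n) \<le> k"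
    using card_bool_cube[where 'n = 'n] \<open>card (P \<union> N) = k\<close> by simp
qed

theorem proposition1:
  shows "(\<forall>f :: real^'n \<Rightarrow> bool. symmetric_bf f \<longrightarrow> NN f \<le> CARD('n) + 1)
         \<and> BNN (parity :: real^'n \<Rightarrow> bool) = 2 ^ CARD('n)"
  using NN_symmetric_le BNN_parity by blast

end
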